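(* For every integer $n\ge 1$, $$\sum_{\pi\in \mathcal I^C_{2n}(321)}q^{\mathrm{maj}^+(\pi)}=\sum_{h=0}^{n} \binom{n}{h}_q+(q^n-1)\sum_{h=0}^{n-1} \binom{n-1}{h}_q=\sum_{h=0}^{n} q^{n-h}\binom{n}{h}_q,$$ where $\binom{n}{h}_q$ denotes the Gaussian ($q$-)binomial coefficient.
   Context: A permutation $\pi\in\mathcal S_m$ is centrosymmetric if $\pi(i)+\pi(m+1-i)=m+1$ for all $i$. $\mathcal I^C_m(321)$ is the set of centrosymmetric involutions in $\mathcal S_m$ avoiding the pattern $321$. A descent of $\pi$ is a position $i\in\{1,\dots,m-1\}$ with $\pi(i)>\pi(i+1)$; $\mathrm{Des}(\pi)$ is the set of descents. With $n=\lfloor m/2\rfloor$, $\mathrm{Des}^+(\pi)=\mathrm{Des}(\pi)\cap\{1,\dots,n\}$ and $\mathrm{maj}^+(\pi)=\sum_{i\in\mathrm{Des}^+(\pi)}i$. *)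

theory Defs
  imports "HOL-Combinatorics.Permutations"
begin

text \<open>Permutations of [m] = {1..m} are functions nat => nat that permute {1..m}.\<close>

definition centrosymmetric :: "nat \<Rightarrow> (nat \<Rightarrow> nat) \<Rightarrow> bool" where
  "centrosymmetric m \<pi> \<longleftrightarrow> (\<forall>i\<in>{1..m}. \<pi> i + \<pi> (m + 1 - i) = m + 1)"

definition is_involution :: "nat \<Rightarrow> (nat \<Rightarrow> nat) \<Rightarrow> bool" where
  "is_involution m \<pi> \<longleftrightarrow> (\<forall>i\<in>{1..m}. \<pi> (\<pi> i) = i)"

definition avoids321 :: "nat \<Rightarrow> (nat \<Rightarrow> nat) \<Rightarrow> bool" where
  "avoids321 m \<pi> \<longleftrightarrow>
     \<not> (\<exists>i j k. 1 \<le> i \<and> i < j \<and> j < k \<and> k \<le> m \<and> \<pi> i > \<pi> j \<and> \<pi> j > \<pi> k)"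

definition centro_inv_321 :: "nat \<Rightarrow> (nat \<Rightarrow> nat) set" where
  "centro_inv_321 m = {\<pi>. \<pi> permutes {1..m} \<and> is_involution m \<pi> \<and>
                           centrosymmetric m \<pi> \<and> avoids321 m \<pi>}"

definition Des :: "nat \<Rightarrow> (nat \<Rightarrow> nat) \<Rightarrow> nat set" where
  "Des m \<pi> = {i \<in> {1..<m}. \<pi> i > \<pi> (i + 1)}"

definition Des_plus :: "nat \<Rightarrow> (nat \<Rightarrow> nat) \<Rightarrow> nat set" where
  "Des_plus m \<pi> = Des m \<pi> \<inter> {1..m div 2}"

definition maj_plus :: "nat \<Rightarrow> (nat \<Rightarrow> nat) \<Rightarrow> nat" where
  "maj_plus m \<pi> = (\<Sum>i\<in>Des_plus m \<pi>. i)"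

text \<open>Gaussian binomial coefficient, via the q-Pascal recursion
  [n+1 choose k+1]_q = [n choose k]_q + q^(k+1) [n choose k+1]_q (which is division-free,
  so it makes sense for q in any commutative ring).\<close>
fun qbinomial :: "'a::comm_ring_1 \<Rightarrow> nat \<Rightarrow> nat \<Rightarrow> 'a" where
  "qbinomial q n 0 = 1"
| "qbinomial q 0 (Suc k) = 0"
| "qbinomial q (Suc n) (Suc k) = qbinomial q n k + q ^ Suc k * qbinomial q n (Suc k)"

end

theory Submission
  imports Defs
begin

text \<open>A centrosymmetric 321-avoiding involution of \<open>{1..2n}\<close> is determined by the set
  \<open>S \<subseteq> {1..n}\<close> of its excedances in the first half. Conversely, reading \<open>S\<close> as the up steps of a
  lattice path (the other steps going down, or staying horizontal at height 0) and mirroring it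
  gives a symmetric path of length \<open>2n\<close>; matching its up and down steps like brackets yields the
  involution. Under this bijection the descents in \<open>{1..n}\<close> are the ends of the runs of \<open>S\<close>, so
  the left-hand side is the generating function of subsets of \<open>{1..n}\<close> by the sum of their run
  ends. Adding \<open>n + 1\<close> or not gives a recurrence for it that is also satisfied by
  \<open>\<Sum>h. q^(n-h) [n,h]_q\<close>, and the middle expression is the Galois number recurrence.\<close>

section \<open>Gaussian binomial sums\<close>

lemma qbinomial_eq_0: "n < k \<Longrightarrow> qbinomial q n k = 0"
proof (induction n arbitrary: k)
  case 0 then show ?case by (cases k) auto
next
  case (Suc n) then show ?case by (cases k) auto
qed

lemma qbinomial_Suc_Suc_dual:
  "qbinomial q (Suc n) (Suc k) = q ^ (n - k) * qbinomial q n k + qbinomial q n (Suc k)"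
proof (induction n arbitrary: k)
  case 0 then show ?case by (cases k) auto
next
  case (Suc m)
  show ?case
  proof (cases k)
    case 0
    then show ?thesis using Suc.IH[of 0] by (simp add: algebra_simps)
  next
    case (Suc j)
    have shift: "q ^ Suc (Suc j) * (q ^ (m - Suc j) * qbinomial q m (Suc j))
               = q ^ (Suc m - Suc j) * (q ^ Suc j * qbinomial q m (Suc j))"
    proof (cases "Suc j \<le> m")
      case True
      then have "Suc (Suc j) + (m - Suc j) = (Suc m - Suc j) + Suc j" by simp
      then show ?thesis by (metis mult.assoc power_add)
    qed (simp add: qbinomial_eq_0)
    have "qbinomial q (Suc (Suc m)) (Suc k)
          = qbinomial q (Suc m) (Suc j) + q ^ Suc (Suc j) * qbinomial q (Suc m) (Suc (Suc j))"
      using Suc by simp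
    also have "\<dots> = q ^ (m - j) * qbinomial q m j + qbinomial q m (Suc j)
        + q ^ Suc (Suc j) * (q ^ (m - Suc j) * qbinomial q m (Suc j))
        + q ^ Suc (Suc j) * qbinomial q m (Suc (Suc j))"
      unfolding Suc.IH[of j] Suc.IH[of "Suc j"] by (simp add: algebra_simps)
    also have "\<dots> = q ^ (Suc m - k) * (qbinomial q m j + q ^ Suc j * qbinomial q m (Suc j))
        + (qbinomial q m (Suc j) + q ^ Suc (Suc j) * qbinomial q m (Suc (Suc j)))"
      unfolding shift using Suc by (simp add: algebra_simps)
    also have "\<dots> = q ^ (Suc m - k) * qbinomial q (Suc m) k + qbinomial q (Suc m) (Suc k)"
      using Suc by simp
    finally show ?thesis .
  qed
qed

definition galois :: "'a::comm_ring_1 \<Rightarrow> nat \<Rightarrow> 'a" where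
  "galois q n = (\<Sum>h=0..n. qbinomial q n h)"

definition galois_weighted :: "'a::comm_ring_1 \<Rightarrow> nat \<Rightarrow> 'a" where
  "galois_weighted q n = (\<Sum>h=0..n. q ^ (n - h) * qbinomial q n h)"

lemma galois_Suc: "galois q (Suc n) = galois_weighted q n + galois q n"
proof -
  have "galois q (Suc n) = 1 + (\<Sum>h=0..n. qbinomial q (Suc n) (Suc h))"
    unfolding galois_def sum.atLeast0_atMost_Suc_shift by (simp del: qbinomial.simps(3))
  also have "\<dots> = galois_weighted q n + (1 + (\<Sum>h=0..n. qbinomial q n (Suc h)))"
    unfolding qbinomial_Suc_Suc_dual sum.distrib galois_weighted_def by (simp add: algebra_simps)
  also have "1 + (\<Sum>h=0..n. qbinomial q n (Suc h)) = galois q n"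
    using sum.atLeast0_atMost_Suc_shift[of "qbinomial q n" n]
    by (simp add: galois_def qbinomial_eq_0)
  finally show ?thesis .
qed

lemma galois_weighted_Suc:
  "galois_weighted q (Suc n) = galois_weighted q n + q ^ Suc n * galois q n"
proof -
  have "galois_weighted q (Suc n)
        = q ^ Suc n + (\<Sum>h=0..n. q ^ (n - h) * qbinomial q (Suc n) (Suc h))"
    unfolding galois_weighted_def sum.atLeast0_atMost_Suc_shift by (simp del: qbinomial.simps(3))
  also have "\<dots> = galois_weighted q n + q ^ Suc n * (1 + (\<Sum>h=0..n. qbinomial q n (Suc h)))"
  proof -
    have "q ^ (n - h) * qbinomial q (Suc n) (Suc h)
          = q ^ (n - h) * qbinomial q n h + q ^ Suc n * qbinomial q n (Suc h)" if "h \<le> n" for h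
    proof -
      have "q ^ (n - h) * q ^ Suc h = q ^ Suc n"
        using that by (simp flip: power_add del: power_Suc)
      then show ?thesis by (simp add: distrib_left mult.assoc[symmetric] del: power_Suc)
    qed
    then have "(\<Sum>h=0..n. q ^ (n - h) * qbinomial q (Suc n) (Suc h))
             = galois_weighted q n + (\<Sum>h=0..n. q ^ Suc n * qbinomial q n (Suc h))"
      unfolding galois_weighted_def sum.distrib[symmetric] by (intro sum.cong) auto
    then show ?thesis by (simp add: sum_distrib_left algebra_simps)
  qed
  also have "1 + (\<Sum>h=0..n. qbinomial q n (Suc h)) = galois q n"
    using sum.atLeast0_atMost_Suc_shift[of "qbinomial q n" n]
    by (simp add: galois_def qbinomial_eq_0)
  finally show ?thesis .
qed

lemma galois_recurrence:
  "galois q (Suc n) + (q ^ Suc n - 1) * galois q n = galois_weighted q (Suc n)"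
  by (simp add: galois_Suc galois_weighted_Suc algebra_simps)

section \<open>Subsets weighted by their run ends\<close>

lemma sum_Pow_insert:
  fixes f :: "'a set \<Rightarrow> 'b::comm_monoid_add"
  assumes "finite A" "a \<notin> A"
  shows "(\<Sum>S\<in>Pow (insert a A). f S) = (\<Sum>S\<in>Pow A. f S) + (\<Sum>S\<in>Pow A. f (insert a S))"
proof -
  have "inj_on (insert a) (Pow A)"
    using assms(2) by (intro inj_onI) (metis Pow_iff insert_ident subset_iff)
  moreover have "Pow A \<inter> insert a ` Pow A = {}" using assms(2) by auto
  ultimately show ?thesis
    using assms(1) by (simp add: Pow_insert sum.union_disjoint sum.reindex)
qed

definition run_ends :: "nat set \<Rightarrow> nat set" where
  "run_ends S = {i \<in> S. Suc i \<notin> S}"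

lemma finite_run_ends: "finite S \<Longrightarrow> finite (run_ends S)"
  unfolding run_ends_def by simp

lemma run_ends_insert_Suc:
  "S \<subseteq> {1..n} \<Longrightarrow> run_ends (insert (Suc n) S) = insert (Suc n) (run_ends S - {n})"
  unfolding run_ends_def by auto

definition run_end_gf :: "'a::comm_ring_1 \<Rightarrow> nat \<Rightarrow> 'a" where
  "run_end_gf q n = (\<Sum>S\<in>Pow {1..n}. q ^ \<Sum>(run_ends S))"

text \<open>The last element \<open>n\<close> is not counted: it is the end of a run only if \<open>n + 1\<close> is not added.\<close>
definition run_end_gf_open :: "'a::comm_ring_1 \<Rightarrow> nat \<Rightarrow> 'a" where
  "run_end_gf_open q n = (\<Sum>S\<in>Pow {1..n}. q ^ \<Sum>(run_ends S - {n}))"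

lemma sum_Pow_atLeastAtMost_Suc:
  fixes f :: "nat set \<Rightarrow> 'b::comm_monoid_add"
  shows "(\<Sum>S\<in>Pow {1..Suc n}. f S) = (\<Sum>S\<in>Pow {1..n}. f S) + (\<Sum>S\<in>Pow {1..n}. f (insert (Suc n) S))"
  using sum_Pow_insert[of "{1..n}" "Suc n" f] by (simp add: atLeastAtMostSuc_conv)

lemma run_end_gf_Suc:
  "run_end_gf q (Suc n) = run_end_gf q n + q ^ Suc n * run_end_gf_open q n"
proof -
  have "q ^ \<Sum>(run_ends (insert (Suc n) S)) = q ^ Suc n * q ^ \<Sum>(run_ends S - {n})"
    if "S \<subseteq> {1..n}" for S
  proof -
    have "finite (run_ends S - {n})" "Suc n \<notin> run_ends S - {n}"
      using that finite_subset[OF that] by (auto simp: finite_run_ends run_ends_def)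
    then show ?thesis by (simp add: run_ends_insert_Suc[OF that] power_add)
  qed
  then have "(\<Sum>S\<in>Pow {1..n}. q ^ \<Sum>(run_ends (insert (Suc n) S)))
             = (\<Sum>S\<in>Pow {1..n}. q ^ Suc n * q ^ \<Sum>(run_ends S - {n}))"
    by (intro sum.cong) auto
  then show ?thesis
    unfolding run_end_gf_def run_end_gf_open_def sum_Pow_atLeastAtMost_Suc sum_distrib_left
    by simp
qed

lemma run_end_gf_open_Suc: "run_end_gf_open q (Suc n) = run_end_gf q n + run_end_gf_open q n"
proof -
  have "run_end_gf_open q (Suc n) = (\<Sum>S\<in>Pow {1..n}. q ^ \<Sum>(run_ends S - {Suc n}))
      + (\<Sum>S\<in>Pow {1..n}. q ^ \<Sum>(run_ends (insert (Suc n) S) - {Suc n}))"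
    unfolding run_end_gf_open_def by (rule sum_Pow_atLeastAtMost_Suc)
  also have "(\<Sum>S\<in>Pow {1..n}. q ^ \<Sum>(run_ends S - {Suc n})) = run_end_gf q n"
    unfolding run_end_gf_def
    by (intro sum.cong refl arg_cong[where f="\<lambda>A. q ^ \<Sum>A"]) (auto simp: run_ends_def)
  also have "(\<Sum>S\<in>Pow {1..n}. q ^ \<Sum>(run_ends (insert (Suc n) S) - {Suc n}))
           = run_end_gf_open q n"
    unfolding run_end_gf_open_def
    by (intro sum.cong refl arg_cong[where f="\<lambda>A. q ^ \<Sum>A"])
       (simp add: run_ends_insert_Suc, auto simp: run_ends_def)
  finally show ?thesis .
qed

lemma run_end_gf_eq_galois_weighted: "run_end_gf q n = galois_weighted q n"
proof -
  have "run_end_gf q n = galois_weighted q n \<and> run_end_gf_open q n = galois q n"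
  proof (induction n)
    case 0 then show ?case
      by (simp add: run_end_gf_def run_end_gf_open_def galois_def galois_weighted_def run_ends_def)
  next
    case (Suc n) then show ?case
      by (simp add: run_end_gf_Suc run_end_gf_open_Suc galois_Suc galois_weighted_Suc)
  qed
  then show ?thesis ..
qed

section \<open>Dyck paths and their bracket involutions\<close>

lemma avoids321I:
  assumes "\<And>x y. 1 \<le> x \<Longrightarrow> x < y \<Longrightarrow> y \<le> m \<Longrightarrow> P x \<Longrightarrow> P y \<Longrightarrow> f x < f y"
    and "\<And>x y. 1 \<le> x \<Longrightarrow> x < y \<Longrightarrow> y \<le> m \<Longrightarrow> \<not> P x \<Longrightarrow> \<not> P y \<Longrightarrow> f x < f y"
  shows "avoids321 m f"
  unfolding avoids321_def
proof
  assume "\<exists>i j k. 1 \<le> i \<and> i < j \<and> j < k \<and> k \<le> m \<and> f i > f j \<and> f j > f k"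
  then obtain i j k where "1 \<le> i" "i < j" "j < k" "k \<le> m" "f i > f j" "f j > f k"
    by blast
  moreover have mono: "f x < f y" if "1 \<le> x" "x < y" "y \<le> m" "P x = P y" for x y
    using assms that by (cases "P x") auto
  moreover have "P i = P j \<or> P j = P k \<or> P i = P k" by blast
  ultimately show False
    using mono[of i j] mono[of j k] mono[of i k] by fastforce
qed

lemma card_filter_atLeastAtMost_Suc:
  "card {x \<in> {1..Suc t}. P x} = card {x \<in> {1..t}. P x} + (if P (Suc t) then 1 else 0)"
proof -
  have "{x \<in> {1..Suc t}. P x}
        = (if P (Suc t) then insert (Suc t) {x \<in> {1..t}. P x} else {x \<in> {1..t}. P x})"
    by (auto simp: le_Suc_eq)
  then show ?thesis by simp
qed

text \<open>\<open>H\<close> is the height function of a Dyck path of length \<open>M\<close> in which horizontal steps are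
  also allowed, but only at height 0. Matching each up step with its down step as in a bracket
  word, and fixing the horizontal steps, gives a 321-avoiding involution of \<open>{1..M}\<close>.\<close>
locale dyck_path =
  fixes M :: nat and H :: "nat \<Rightarrow> nat"
  assumes start: "H 0 = 0" and finish: "H M = 0"
    and step: "\<And>x. 1 \<le> x \<Longrightarrow> x \<le> M \<Longrightarrow>
      H x = Suc (H (x - 1)) \<or> Suc (H x) = H (x - 1) \<or> (H x = 0 \<and> H (x - 1) = 0)"
begin

definition up :: "nat \<Rightarrow> bool" where "up x \<longleftrightarrow> 1 \<le> x \<and> x \<le> M \<and> H (x - 1) < H x"
definition down :: "nat \<Rightarrow> bool" where "down x \<longleftrightarrow> 1 \<le> x \<and> x \<le> M \<and> H x < H (x - 1)"

definition ups :: "nat \<Rightarrow> nat" where "ups t = card {x \<in> {1..t}. up x}"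
definition downs :: "nat \<Rightarrow> nat" where "downs t = card {x \<in> {1..t}. down x}"

lemma up_not_down: "up x \<Longrightarrow> \<not> down x"
  unfolding up_def down_def by auto

lemma flat_step: "1 \<le> x \<Longrightarrow> x \<le> M \<Longrightarrow> \<not> up x \<Longrightarrow> \<not> down x \<Longrightarrow> H x = 0 \<and> H (x - 1) = 0"
  using step unfolding up_def down_def by fastforce

lemma ups_0 [simp]: "ups 0 = 0" and downs_0 [simp]: "downs 0 = 0"
  unfolding ups_def downs_def by simp_all

lemma ups_Suc: "ups (Suc t) = ups t + (if up (Suc t) then 1 else 0)"
  unfolding ups_def by (rule card_filter_atLeastAtMost_Suc)

lemma downs_Suc: "downs (Suc t) = downs t + (if down (Suc t) then 1 else 0)"
  unfolding downs_def by (rule card_filter_atLeastAtMost_Suc)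

lemma ups_mono: "s \<le> t \<Longrightarrow> ups s \<le> ups t"
  unfolding ups_def by (rule card_mono) auto

lemma downs_mono: "s \<le> t \<Longrightarrow> downs s \<le> downs t"
  unfolding downs_def by (rule card_mono) auto

lemma ups_eq_downs_plus_height: "t \<le> M \<Longrightarrow> ups t = downs t + H t"
proof (induction t)
  case 0 then show ?case by (simp add: start)
next
  case (Suc t)
  then consider "H (Suc t) = Suc (H t)" | "Suc (H (Suc t)) = H t" | "H (Suc t) = 0 \<and> H t = 0"
    using step[of "Suc t"] by auto
  then show ?case
    using Suc by cases (auto simp: ups_Suc downs_Suc up_def down_def)
qed

lemma downs_finish: "downs M = ups M"
  using ups_eq_downs_plus_height[of M] finish by simp

lemma ups_at_up: "up j \<Longrightarrow> ups j = Suc (ups (j - 1))"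
  using ups_Suc[of "j - 1"] by (simp add: up_def)

lemma downs_at_down: "down j \<Longrightarrow> downs j = Suc (downs (j - 1))"
  using downs_Suc[of "j - 1"] by (simp add: down_def)

lemma ups_less: "up i \<Longrightarrow> up j \<Longrightarrow> i < j \<Longrightarrow> ups i < ups j"
  using ups_mono[of i "j - 1"] ups_at_up[of j] by fastforce

lemma downs_less: "down i \<Longrightarrow> down j \<Longrightarrow> i < j \<Longrightarrow> downs i < downs j"
  using downs_mono[of i "j - 1"] downs_at_down[of j] by fastforce

lemma ups_inj: "up i \<Longrightarrow> up j \<Longrightarrow> ups i = ups j \<Longrightarrow> i = j"
  using ups_less[of i j] ups_less[of j i] by (cases i j rule: linorder_cases) auto

lemma downs_inj: "down i \<Longrightarrow> down j \<Longrightarrow> downs i = downs j \<Longrightarrow> i = j"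
  using downs_less[of i j] downs_less[of j i] by (cases i j rule: linorder_cases) auto

lemma matching_down_exists:
  assumes "up x" shows "\<exists>j. down j \<and> downs j = ups x \<and> x < j"
proof -
  define k where "k = ups x"
  have x: "1 \<le> x" "x \<le> M" and "H x \<ge> 1"
    using assms by (auto simp: up_def)
  then have below: "downs x < k"
    unfolding k_def using ups_eq_downs_plus_height by simp
  have reached: "k \<le> downs M"
    unfolding k_def downs_finish using ups_mono x by simp
  define j where "j = (LEAST j. k \<le> downs j)"
  have "k \<le> downs j"
    unfolding j_def by (rule LeastI[of _ M]) (rule reached)
  then have "j \<noteq> 0"
    using below by (cases j) auto
  have "\<not> k \<le> downs (j - 1)"
    unfolding j_def by (rule not_less_Least) (use \<open>j \<noteq> 0\<close> in \<open>simp add: j_def\<close>)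
  then have "down j" "downs j = k"
    using downs_Suc[of "j - 1"] \<open>k \<le> downs j\<close> \<open>j \<noteq> 0\<close> by (auto split: if_splits)
  moreover have "x < j"
    using downs_mono[of j x] below \<open>downs j = k\<close> by (meson not_less)
  ultimately show ?thesis unfolding k_def by blast
qed

lemma matching_up_exists:
  assumes "down x" shows "\<exists>i. up i \<and> ups i = downs x \<and> i < x"
proof -
  define k where "k = downs x"
  have x: "1 \<le> x" "x \<le> M" and "H (x - 1) \<ge> 1"
    using assms by (auto simp: down_def)
  then have reached: "k \<le> ups (x - 1)"
    unfolding k_def downs_at_down[OF assms] using ups_eq_downs_plus_height[of "x - 1"] by simp
  define i where "i = (LEAST i. k \<le> ups i)"
  have "k \<le> ups i"
    unfolding i_def by (rule LeastI[of _ "x - 1"]) (rule reached)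
  then have "i \<noteq> 0"
    by (cases i) (auto simp: k_def downs_at_down[OF assms])
  have "i \<le> x - 1"
    unfolding i_def by (rule Least_le) (rule reached)
  have "\<not> k \<le> ups (i - 1)"
    unfolding i_def by (rule not_less_Least) (use \<open>i \<noteq> 0\<close> in \<open>simp add: i_def\<close>)
  then have "up i" "ups i = k"
    using ups_Suc[of "i - 1"] \<open>k \<le> ups i\<close> \<open>i \<noteq> 0\<close> by (auto split: if_splits)
  then show ?thesis
    unfolding k_def using \<open>i \<le> x - 1\<close> x by auto
qed

definition partner :: "nat \<Rightarrow> nat" where
  "partner x = (if up x then THE j. down j \<and> downs j = ups x
                else if down x then THE i. up i \<and> ups i = downs x else x)"

lemma partner_up: assumes "up x" shows "down (partner x) \<and> downs (partner x) = ups x \<and> x < partner x"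
proof -
  obtain j where j: "down j" "downs j = ups x" "x < j" using matching_down_exists[OF assms] by blast
  have "(THE j. down j \<and> downs j = ups x) = j"
    by (rule the_equality) (use j downs_inj in auto)
  then show ?thesis using j assms unfolding partner_def by simp
qed

lemma partner_down: assumes "down x" shows "up (partner x) \<and> ups (partner x) = downs x \<and> partner x < x"
proof -
  obtain i where i: "up i" "ups i = downs x" "i < x" using matching_up_exists[OF assms] by blast
  have "(THE i. up i \<and> ups i = downs x) = i"
    by (rule the_equality) (use i ups_inj in auto)
  then show ?thesis using i assms up_not_down unfolding partner_def by auto
qed

lemma partner_flat: "\<not> up x \<Longrightarrow> \<not> down x \<Longrightarrow> partner x = x"
  unfolding partner_def by simp

lemma partner_partner: "partner (partner x) = x"
proof -
  consider "up x" | "down x" | "\<not> up x" "\<not> down x" by blast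
  then show ?thesis
  proof cases
    case 1
    then show ?thesis using partner_up partner_down ups_inj by metis
  next
    case 2
    then show ?thesis using partner_up partner_down downs_inj by metis
  qed (simp add: partner_flat)
qed

lemma partner_permutes: "partner permutes {1..M}"
  unfolding permutes_def
proof (intro conjI allI impI)
  show "partner x = x" if "x \<notin> {1..M}" for x
    using that partner_flat by (auto simp: up_def down_def)
  show "\<exists>!x. partner x = y" for y
    by (metis partner_partner)
qed

lemma partner_involution: "is_involution M partner"
  unfolding is_involution_def using partner_partner by simp

lemma less_partner_iff_up: "x < partner x \<longleftrightarrow> up x"
  using partner_up partner_down partner_flat by (metis less_asym less_irrefl)

lemma partner_mono_on_up: "up x \<Longrightarrow> up y \<Longrightarrow> x < y \<Longrightarrow> partner x < partner y"
  using partner_up downs_mono ups_less by (metis leD leI)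

lemma partner_mono_on_not_up:
  assumes "1 \<le> x" "x < y" "y \<le> M" "\<not> up x" "\<not> up y"
  shows "partner x < partner y"
proof (cases "down y")
  case False
  then show ?thesis
    using assms partner_flat partner_down[of x] by (cases "down x") auto
next
  case dy: True
  show ?thesis
  proof (cases "down x")
    case True
    then have "ups (partner x) < ups (partner y)"
      using partner_down dy downs_less assms by auto
    then show ?thesis using ups_mono by (meson leI less_le_not_le)
  next
    case False
    then have "partner x = x" "ups x = downs x"
      using partner_flat assms flat_step[of x] ups_eq_downs_plus_height[of x] by auto
    moreover have "downs x \<le> downs (y - 1)" "downs (y - 1) < downs y"
      using downs_mono assms downs_at_down[OF dy] by auto
    moreover have "ups (partner y) = downs y"
      using partner_down[OF dy] by simp
    ultimately show ?thesis
      using ups_mono[of "partner y" x] by (metis leI le_less_trans less_irrefl)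
  qed
qed

lemma partner_avoids321: "avoids321 M partner"
  by (rule avoids321I[where P = up]) (auto intro: partner_mono_on_up partner_mono_on_not_up)

end

locale symmetric_dyck_path = dyck_path +
  assumes symmetric: "\<And>t. t \<le> M \<Longrightarrow> H (M - t) = H t"
begin

lemma mirror_heights:
  assumes "1 \<le> x" "x \<le> M"
  shows "H (M + 1 - x - 1) = H x" "H (M + 1 - x) = H (x - 1)"
  using symmetric[of x] symmetric[of "x - 1"] assms by (simp_all add: Suc_diff_le)

lemma up_mirror: "1 \<le> x \<Longrightarrow> x \<le> M \<Longrightarrow> up (M + 1 - x) \<longleftrightarrow> down x"
  using mirror_heights unfolding up_def down_def by auto

lemma down_mirror: "1 \<le> x \<Longrightarrow> x \<le> M \<Longrightarrow> down (M + 1 - x) \<longleftrightarrow> up x"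
  using mirror_heights unfolding up_def down_def by auto

lemma ups_mirror: "t \<le> M \<Longrightarrow> ups (M - t) + downs t = downs M"
proof (induction t)
  case 0 then show ?case using downs_finish by simp
next
  case (Suc t)
  have "M - t = Suc (M - Suc t)" using Suc.prems by simp
  moreover have "up (M - t) \<longleftrightarrow> down (Suc t)" using up_mirror[of "Suc t"] Suc.prems by simp
  ultimately show ?case using Suc ups_Suc[of "M - Suc t"] downs_Suc[of t] by (simp split: if_splits)
qed

lemma downs_mirror: "t \<le> M \<Longrightarrow> downs (M - t) + ups t = downs M"
  using ups_mirror[of t] ups_eq_downs_plus_height[of t] ups_eq_downs_plus_height[of "M - t"]
    symmetric[of t]
  by simp

lemma partner_mirror_up:
  assumes "up x" shows "partner x + partner (M + 1 - x) = M + 1"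
proof -
  define j where "j = partner x"
  have "down j" and j_x: "downs j = ups x"
    using partner_up[OF assms] by (auto simp: j_def)
  have x: "1 \<le> x" "x \<le> M" and j: "1 \<le> j" "j \<le> M"
    using assms \<open>down j\<close> by (auto simp: up_def down_def)
  have "M - (j - 1) = M + 1 - j" "M - (x - 1) = M + 1 - x"
    using x j by auto
  then have "ups (M + 1 - j) + downs (j - 1) = downs (M + 1 - x) + ups (x - 1)"
    using ups_mirror[of "j - 1"] downs_mirror[of "x - 1"] x j by simp
  moreover have "downs (j - 1) = ups (x - 1)"
    using j_x downs_at_down[OF \<open>down j\<close>] ups_at_up[OF assms] by simp
  ultimately have "ups (M + 1 - j) = downs (M + 1 - x)"
    by simp
  moreover have "up (M + 1 - j)" "down (M + 1 - x)"
    using up_mirror[OF j] down_mirror[OF x] \<open>down j\<close> assms by simp_all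
  ultimately have "partner (M + 1 - x) = M + 1 - j"
    using partner_down ups_inj by metis
  then show ?thesis using j j_def by simp
qed

lemma partner_centrosymmetric: "centrosymmetric M partner"
  unfolding centrosymmetric_def
proof
  fix x assume "x \<in> {1..M}"
  then have x: "1 \<le> x" "x \<le> M" by auto
  consider "up x" | "down x" | "\<not> up x" "\<not> down x" by blast
  then show "partner x + partner (M + 1 - x) = M + 1"
  proof cases
    case 1 then show ?thesis by (rule partner_mirror_up)
  next
    case 2
    then have "partner (M + 1 - x) + partner (M + 1 - (M + 1 - x)) = M + 1"
      using up_mirror x by (intro partner_mirror_up) simp
    then show ?thesis using x by simp
  next
    case 3
    then show ?thesis
      using up_mirror[OF x] down_mirror[OF x] x by (simp add: partner_flat)
  qed
qed

lemma partner_in_centro_inv_321: "partner \<in> centro_inv_321 M"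
  unfolding centro_inv_321_def
  using partner_permutes partner_involution partner_centrosymmetric partner_avoids321 by simp

end

section \<open>Centrosymmetric 321-avoiding involutions\<close>

text \<open>Truncated subtraction turns a down step at height 0 into a horizontal one.\<close>
fun height :: "nat set \<Rightarrow> nat \<Rightarrow> nat" where
  "height S 0 = 0"
| "height S (Suc i) = (if Suc i \<in> S then Suc (height S i) else height S i - 1)"

definition hill :: "nat set \<Rightarrow> nat \<Rightarrow> nat \<Rightarrow> nat" where
  "hill S n t = height S (min t (2 * n - t))"

lemma hill_first_half: "t \<le> n \<Longrightarrow> hill S n t = height S t"
  unfolding hill_def by (simp add: min_absorb1)

lemma hill_second_half: "n \<le> t \<Longrightarrow> hill S n t = height S (2 * n - t)"
  unfolding hill_def by (simp add: min_absorb2)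

lemma height_step:
  "height S (Suc i) = Suc (height S i) \<or> Suc (height S (Suc i)) = height S i
   \<or> (height S (Suc i) = 0 \<and> height S i = 0)"
  by (cases "height S i") auto

lemma symmetric_dyck_path_hill: "symmetric_dyck_path (2 * n) (hill S n)"
proof unfold_locales
  show "hill S n 0 = 0" "hill S n (2 * n) = 0" unfolding hill_def by simp_all
next
  fix x :: nat assume x: "1 \<le> x" "x \<le> 2 * n"
  show "hill S n x = Suc (hill S n (x - 1)) \<or> Suc (hill S n x) = hill S n (x - 1)
        \<or> (hill S n x = 0 \<and> hill S n (x - 1) = 0)"
  proof (cases "x \<le> n")
    case True
    then have "hill S n x = height S (Suc (x - 1))" "hill S n (x - 1) = height S (x - 1)"
      using x by (simp_all add: hill_first_half)
    then show ?thesis using height_step by simp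
  next
    case False
    then have "hill S n x = height S (2 * n - x)" "hill S n (x - 1) = height S (Suc (2 * n - x))"
      using x by (simp_all add: hill_second_half Suc_diff_le)
    then show ?thesis using height_step by auto
  qed
next
  fix t assume "t \<le> 2 * n"
  then show "hill S n (2 * n - t) = hill S n t" unfolding hill_def by (simp add: min.commute)
qed

definition low_excedances :: "nat \<Rightarrow> (nat \<Rightarrow> nat) \<Rightarrow> nat set" where
  "low_excedances n \<pi> = {i \<in> {1..n}. i < \<pi> i}"

lemma low_excedances_hill_partner:
  assumes "S \<subseteq> {1..n}"
  shows "low_excedances n (dyck_path.partner (2 * n) (hill S n)) = S"
proof -
  interpret symmetric_dyck_path "2 * n" "hill S n" by (rule symmetric_dyck_path_hill)
  have "i < partner i \<longleftrightarrow> i \<in> S" if i: "1 \<le> i" "i \<le> n" for i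
  proof -
    obtain k where k: "i = Suc k" using i by (cases i) auto
    have "hill S n i = height S (Suc k)" "hill S n (i - 1) = height S k"
      using i k by (simp_all add: hill_first_half)
    then have "up i \<longleftrightarrow> height S k < height S (Suc k)"
      using i unfolding up_def by simp
    also have "\<dots> \<longleftrightarrow> i \<in> S"
      unfolding k by (cases "height S k") auto
    finally show ?thesis by (simp add: less_partner_iff_up)
  qed
  then show ?thesis using assms unfolding low_excedances_def by auto
qed

lemma low_excedances_image:
  "low_excedances n ` centro_inv_321 (2 * n) = Pow {1..n}"
proof
  show "low_excedances n ` centro_inv_321 (2 * n) \<subseteq> Pow {1..n}"
    unfolding low_excedances_def by auto
  show "Pow {1..n} \<subseteq> low_excedances n ` centro_inv_321 (2 * n)"
  proof
    fix S assume "S \<in> Pow {1..n}"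
    then show "S \<in> low_excedances n ` centro_inv_321 (2 * n)"
      using low_excedances_hill_partner symmetric_dyck_path.partner_in_centro_inv_321[OF symmetric_dyck_path_hill]
      by (metis PowD image_eqI)
  qed
qed

locale involution_321 =
  fixes m :: nat and \<pi> :: "nat \<Rightarrow> nat"
  assumes permutes: "\<pi> permutes {1..m}"
    and involution: "is_involution m \<pi>"
    and avoids: "avoids321 m \<pi>"
begin

lemma in_range: "1 \<le> i \<Longrightarrow> i \<le> m \<Longrightarrow> 1 \<le> \<pi> i \<and> \<pi> i \<le> m"
  using permutes_in_image[OF permutes] by (metis atLeastAtMost_iff)

lemma inj: "\<pi> i = \<pi> j \<Longrightarrow> i = j"
  using permutes_inj[OF permutes] by (metis injD)

lemma fixed_outside: "i \<notin> {1..m} \<Longrightarrow> \<pi> i = i"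
  using permutes permutes_not_in by metis

lemma involutive: "1 \<le> i \<Longrightarrow> i \<le> m \<Longrightarrow> \<pi> (\<pi> i) = i"
  using involution unfolding is_involution_def by simp

lemma no_321: "1 \<le> i \<Longrightarrow> i < j \<Longrightarrow> j < k \<Longrightarrow> k \<le> m \<Longrightarrow> \<pi> i > \<pi> j \<Longrightarrow> \<pi> j > \<pi> k \<Longrightarrow> False"
  using avoids unfolding avoids321_def by blast

lemma excedances_increasing:
  assumes "1 \<le> i" "i < j" "j \<le> m" "i < \<pi> i" "j < \<pi> j"
  shows "\<pi> i < \<pi> j"
proof (rule ccontr)
  assume "\<not> \<pi> i < \<pi> j"
  then have "\<pi> j < \<pi> i" using inj[of i j] assms by fastforce
  moreover have "\<pi> i \<le> m" "\<pi> (\<pi> i) = i" using in_range involutive assms by auto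
  ultimately show False using no_321[of i j "\<pi> i"] assms by simp
qed

lemma non_excedances_increasing:
  assumes "1 \<le> i" "i < j" "j \<le> m" "\<pi> i \<le> i" "\<pi> j \<le> j"
  shows "\<pi> i < \<pi> j"
proof (rule ccontr)
  assume "\<not> \<pi> i < \<pi> j"
  then have lt: "\<pi> j < \<pi> i" using inj[of i j] assms by fastforce
  have pos: "1 \<le> \<pi> i" "1 \<le> \<pi> j" and inv: "\<pi> (\<pi> j) = j" "\<pi> (\<pi> i) = i"
    using in_range involutive assms by auto
  show False
  proof (cases "\<pi> i = i")
    case True
    then show False using no_321[of "\<pi> j" i j] assms lt pos inv by simp
  next
    case False
    then have "\<pi> (\<pi> j) < \<pi> (\<pi> i)"
      using excedances_increasing[of "\<pi> j" "\<pi> i"] assms lt pos inv by simp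
    then show False using inv assms by simp
  qed
qed

lemma descent_iff:
  assumes "1 \<le> i" "Suc i \<le> m"
  shows "\<pi> (Suc i) < \<pi> i \<longleftrightarrow> i < \<pi> i \<and> \<not> Suc i < \<pi> (Suc i)"
proof -
  have "\<pi> (Suc i) \<noteq> \<pi> i" using inj by fastforce
  then show ?thesis
    using excedances_increasing[of i "Suc i"] non_excedances_increasing[of i "Suc i"] assms
    by (cases "i < \<pi> i"; cases "Suc i < \<pi> (Suc i)") auto
qed

end

lemma centro_inv_321_iff:
  "\<pi> \<in> centro_inv_321 m \<longleftrightarrow> involution_321 m \<pi> \<and> centrosymmetric m \<pi>"
  unfolding centro_inv_321_def involution_321_def by auto

lemma centrosymmetricD:
  "centrosymmetric m \<pi> \<Longrightarrow> 1 \<le> i \<Longrightarrow> i \<le> m \<Longrightarrow> \<pi> i + \<pi> (m + 1 - i) = m + 1"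
  unfolding centrosymmetric_def by simp

lemma no_first_difference_at_excedance:
  assumes P: "\<pi> \<in> centro_inv_321 (2 * n)" and S: "\<sigma> \<in> centro_inv_321 (2 * n)"
    and same: "low_excedances n \<pi> = low_excedances n \<sigma>"
    and i: "1 \<le> i" "i \<le> n" and agree: "\<forall>c<i. \<pi> c = \<sigma> c"
    and "i < \<pi> i" "\<pi> i < \<sigma> i"
  shows False
proof -
  interpret P: involution_321 "2 * n" \<pi> using P by (simp add: centro_inv_321_iff)
  interpret S: involution_321 "2 * n" \<sigma> using S by (simp add: centro_inv_321_iff)
  have cP: "centrosymmetric (2 * n) \<pi>" and cS: "centrosymmetric (2 * n) \<sigma>"
    using P S by (simp_all add: centro_inv_321_iff)
  define a where "a = \<pi> i"
  define b where "b = \<sigma> i"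
  have "i < a" "a < b" using assms by (simp_all add: a_def b_def)
  have "i \<le> 2 * n" using i by simp
  then have "b \<le> 2 * n" "\<pi> a = i" "\<sigma> b = i"
    using S.in_range[of i] P.involutive[of i] S.involutive[of i] i by (simp_all add: a_def b_def)
  have "a < \<sigma> a"
  proof (rule ccontr)
    assume "\<not> a < \<sigma> a"
    moreover have "\<sigma> a \<noteq> a"
      using S.no_321[of i a b] \<open>i < a\<close> \<open>a < b\<close> \<open>b \<le> 2 * n\<close> \<open>\<sigma> b = i\<close> i
      by (auto simp: b_def)
    ultimately have "\<sigma> a < a" by simp
    define c where "c = \<sigma> a"
    have "1 \<le> a" "a \<le> 2 * n" using \<open>i < a\<close> \<open>a < b\<close> \<open>b \<le> 2 * n\<close> by simp_all
    then have "\<sigma> c = a" "1 \<le> c"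
      using S.involutive[of a] S.in_range[of a] by (simp_all add: c_def)
    consider "c < i" | "c = i" | "i < c" by linarith
    then show False
    proof cases
      case 1
      then show False using agree \<open>\<sigma> c = a\<close> P.inj[of c i] a_def by simp
    next
      case 2
      then show False using \<open>\<sigma> c = a\<close> \<open>a < b\<close> b_def by simp
    next
      case 3
      then have "\<sigma> i < \<sigma> c"
        using S.excedances_increasing[of i c] i \<open>1 \<le> c\<close> \<open>\<sigma> c = a\<close> \<open>\<sigma> a < a\<close> \<open>a < b\<close>
          \<open>b \<le> 2 * n\<close> \<open>i < a\<close> b_def c_def
        by simp
      then show False using \<open>\<sigma> c = a\<close> \<open>a < b\<close> b_def by simp
    qed
  qed
  \<comment> \<open>so \<open>a\<close> is an excedance of \<open>\<sigma>\<close> but not of \<open>\<pi>\<close>; if \<open>a > n\<close>, its mirror image separates them\<close>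
  show False
  proof (cases "a \<le> n")
    case True
    then have "a \<in> low_excedances n \<sigma>" "a \<notin> low_excedances n \<pi>"
      using \<open>a < \<sigma> a\<close> \<open>\<pi> a = i\<close> \<open>i < a\<close> i by (auto simp: low_excedances_def)
    then show False using same by simp
  next
    case False
    define a' where "a' = 2 * n + 1 - a"
    have "1 \<le> a'" "a' \<le> n" "2 * n + 1 - a' = a"
      using False \<open>a < b\<close> \<open>b \<le> 2 * n\<close> by (auto simp: a'_def)
    moreover have "\<pi> a' + \<pi> a = 2 * n + 1" "\<sigma> a' + \<sigma> a = 2 * n + 1"
      using centrosymmetricD[OF cP, of a'] centrosymmetricD[OF cS, of a']
        \<open>1 \<le> a'\<close> \<open>a' \<le> n\<close> \<open>2 * n + 1 - a' = a\<close>
      by simp_all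
    ultimately have "a' \<in> low_excedances n \<pi>" "a' \<notin> low_excedances n \<sigma>"
      using \<open>\<pi> a = i\<close> \<open>i < a\<close> \<open>a < \<sigma> a\<close> by (auto simp: low_excedances_def)
    then show False using same by simp
  qed
qed

lemma low_excedances_inj_on: "inj_on (low_excedances n) (centro_inv_321 (2 * n))"
proof (rule inj_onI, rule ccontr)
  fix \<pi> \<sigma>
  assume P: "\<pi> \<in> centro_inv_321 (2 * n)" and S: "\<sigma> \<in> centro_inv_321 (2 * n)"
    and same: "low_excedances n \<pi> = low_excedances n \<sigma>" and "\<pi> \<noteq> \<sigma>"
  interpret P: involution_321 "2 * n" \<pi> using P by (simp add: centro_inv_321_iff)
  interpret S: involution_321 "2 * n" \<sigma> using S by (simp add: centro_inv_321_iff)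
  have cP: "centrosymmetric (2 * n) \<pi>" and cS: "centrosymmetric (2 * n) \<sigma>"
    using P S by (simp_all add: centro_inv_321_iff)
  define i where "i = (LEAST x. \<pi> x \<noteq> \<sigma> x)"
  have "\<exists>x. \<pi> x \<noteq> \<sigma> x" using \<open>\<pi> \<noteq> \<sigma>\<close> by auto
  then have differ: "\<pi> i \<noteq> \<sigma> i"
    unfolding i_def by (rule LeastI_ex)
  have agree: "\<forall>c<i. \<pi> c = \<sigma> c"
    unfolding i_def using not_less_Least[where P = "\<lambda>x. \<pi> x \<noteq> \<sigma> x"] by blast
  have "i \<in> {1..2 * n}"
    using differ P.fixed_outside[of i] S.fixed_outside[of i] by (cases "i \<in> {1..2 * n}") auto
  then have i: "1 \<le> i" "i \<le> 2 * n" by simp_all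
  have "i \<le> n"
  proof (rule ccontr)
    assume "\<not> i \<le> n"
    then have "2 * n + 1 - i < i" by simp
    moreover have "\<pi> (2 * n + 1 - i) \<noteq> \<sigma> (2 * n + 1 - i)"
      using centrosymmetricD[OF cP i] centrosymmetricD[OF cS i] differ by simp
    ultimately show False using agree by simp
  qed
  moreover have "i \<in> low_excedances n \<pi> \<longleftrightarrow> i \<in> low_excedances n \<sigma>"
    using same by simp
  ultimately have same_i: "i < \<pi> i \<longleftrightarrow> i < \<sigma> i"
    using i by (simp add: low_excedances_def)
  show False
  proof (cases "i < \<pi> i")
    case True
    then have "i < \<sigma> i" using same_i by simp
    consider "\<pi> i < \<sigma> i" | "\<sigma> i < \<pi> i" using differ by linarith
    then show False
    proof cases
      case 1
      show False
        by (rule no_first_difference_at_excedance[OF P S same i(1) \<open>i \<le> n\<close> agree True 1])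
    next
      case 2
      have "\<forall>c<i. \<sigma> c = \<pi> c" using agree by simp
      show False
        by (rule no_first_difference_at_excedance[OF S P same[symmetric] i(1) \<open>i \<le> n\<close>
              \<open>\<forall>c<i. \<sigma> c = \<pi> c\<close> \<open>i < \<sigma> i\<close> 2])
    qed
  next
    case False
    have "\<sigma> i = \<pi> i" if "\<pi> i < i"
    proof -
      have "\<sigma> (\<pi> i) = i" using agree[rule_format, OF that] P.involutive[OF i] by simp
      then show ?thesis using S.involutive[of "\<pi> i"] P.in_range[OF i] by simp
    qed
    moreover have "\<sigma> i = \<pi> i" if "\<sigma> i < i"
    proof -
      have "\<pi> (\<sigma> i) = i" using agree[rule_format, OF that] S.involutive[OF i] by simp
      then show ?thesis using P.involutive[of "\<sigma> i"] S.in_range[OF i] by simp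
    qed
    moreover have "\<pi> i < i \<or> \<sigma> i < i"
      using False same_i differ by linarith
    ultimately show False
      using differ by auto
  qed
qed

lemma low_excedances_bij_betw:
  "bij_betw (low_excedances n) (centro_inv_321 (2 * n)) (Pow {1..n})"
  unfolding bij_betw_def using low_excedances_inj_on low_excedances_image by blast

lemma Des_plus_eq_run_ends:
  assumes "\<pi> \<in> centro_inv_321 (2 * n)"
  shows "Des_plus (2 * n) \<pi> = run_ends (low_excedances n \<pi>)"
proof -
  interpret involution_321 "2 * n" \<pi> using assms by (simp add: centro_inv_321_iff)
  have "i \<in> Des (2 * n) \<pi> \<longleftrightarrow> i < \<pi> i \<and> (i = n \<or> \<not> Suc i < \<pi> (Suc i))"
    if "1 \<le> i" "i \<le> n" for i
  proof (cases "i = n")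
    case True
    \<comment> \<open>by centrosymmetry \<open>\<pi> (n + 1) = 2 n + 1 - \<pi> n\<close>, so \<open>n\<close> is a descent iff an excedance\<close>
    have "\<pi> n + \<pi> (Suc n) = 2 * n + 1" "\<pi> n \<le> 2 * n"
      using centrosymmetricD[of "2 * n" \<pi> n] assms in_range[of n] that True
      by (auto simp: centro_inv_321_iff)
    then show ?thesis using that True by (auto simp: Des_def)
  next
    case False
    then show ?thesis using that descent_iff[of i] by (auto simp: Des_def)
  qed
  then show ?thesis
    by (auto simp: Des_plus_def run_ends_def low_excedances_def)
qed

lemma maj_plus_eq_run_ends_sum:
  "\<pi> \<in> centro_inv_321 (2 * n) \<Longrightarrow> maj_plus (2 * n) \<pi> = \<Sum>(run_ends (low_excedances n \<pi>))"
  unfolding maj_plus_def by (simp add: Des_plus_eq_run_ends)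

theorem mainTheorem2:
  fixes q :: "'a::comm_ring_1" and n :: nat
  assumes "n \<ge> 1"
  shows "(\<Sum>\<pi>\<in>centro_inv_321 (2 * n). q ^ maj_plus (2 * n) \<pi>)
           = (\<Sum>h=0..n. qbinomial q n h) + (q ^ n - 1) * (\<Sum>h=0..n-1. qbinomial q (n - 1) h)
       \<and> (\<Sum>h=0..n. qbinomial q n h) + (q ^ n - 1) * (\<Sum>h=0..n-1. qbinomial q (n - 1) h)
           = (\<Sum>h=0..n. q ^ (n - h) * qbinomial q n h)"
proof -
  obtain m where n: "n = Suc m" using assms by (cases n) auto
  have "(\<Sum>\<pi>\<in>centro_inv_321 (2 * n). q ^ maj_plus (2 * n) \<pi>)
        = (\<Sum>\<pi>\<in>centro_inv_321 (2 * n). q ^ \<Sum>(run_ends (low_excedances n \<pi>)))"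
    by (simp add: maj_plus_eq_run_ends_sum)
  also have "\<dots> = run_end_gf q n"
    unfolding run_end_gf_def by (rule sum.reindex_bij_betw[OF low_excedances_bij_betw])
  also have "\<dots> = galois_weighted q n"
    by (rule run_end_gf_eq_galois_weighted)
  finally show ?thesis
    using galois_recurrence[of q m] unfolding n galois_def galois_weighted_def by simp
qed

end
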